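(* For every smooth projective fan $\mathcal F$ in $V$, the cohomology of the differential graded algebra $(D_{\mathcal F},d)$ is $H^0(D_{\mathcal F},d)=\mathbb Q$ and $H^i(D_{\mathcal F},d)=0$ for all $i>0$.
   Context: $T$ is a complex algebraic torus of dimension $n$, $X_*(T)$ its cocharacter lattice, $V=X_*(T)\otimes\mathbb R$. $\mathcal F$ is a smooth projective rational fan in $V$ with set of vertices (primitive ray generators) $\Gamma_{\mathcal F}$. $D_{\mathcal F}$ is the quotient of the graded-commutative algebra $\mathbb Q[x_c]_{c\in\Gamma_{\mathcal F}}\otimes\bigwedge(\tau_c)_{c\in\Gamma_{\mathcal F}}$ (with $\deg x_c=2$, $\deg\tau_c=1$) by the ideal $\mathcal J_{\mathcal F}$ generated by all monomials $x_{c_{i_1}}\cdots x_{c_{i_h}}\tau_{c_{j_1}}\cdots\tau_{c_{j_k}}$ such that the vertices $c_{i_1},\dots,c_{i_h},c_{j_1},\dots,c_{j_k}$ do not span a cone of $\mathcal F$. The differential $d$ is the unique (graded) derivation of degree $1$ with $d(x_c)=0$, $d(\tau_c)=x_c$; it preserves $\mathcal J_{\mathcal F}$. *)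

theory Defs
  imports "HOL-Analysis.Analysis" "HOL-Library.Poly_Mapping"
begin

section \<open>Fans in V = X_*(T) \<otimes> R, identified with real^'n, X_*(T) with Z^n\<close>

definition lattice :: "(real^'n) set" where
  "lattice = {v. \<forall>i. v $ i \<in> \<int>}"

definition cone_gen :: "(real^'n) set \<Rightarrow> (real^'n) set" where
  "cone_gen S = {y. \<exists>a. (\<forall>c\<in>S. 0 \<le> a c) \<and> y = (\<Sum>c\<in>S. a c *\<^sub>R c)}"

definition rat_cone :: "(real^'n) set \<Rightarrow> bool" where
  "rat_cone \<sigma> \<longleftrightarrow> (\<exists>S. finite S \<and> S \<subseteq> lattice \<and> \<sigma> = cone_gen S) \<and> \<sigma> \<inter> uminus ` \<sigma> = {0}"

definition is_fan :: "(real^'n) set set \<Rightarrow> bool" where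
  "is_fan F \<longleftrightarrow> finite F \<and> (\<forall>\<sigma>\<in>F. rat_cone \<sigma>)
     \<and> (\<forall>\<sigma>\<in>F. \<forall>\<tau>. \<tau> face_of \<sigma> \<and> \<tau> \<noteq> {} \<longrightarrow> \<tau> \<in> F)
     \<and> (\<forall>\<sigma>\<in>F. \<forall>\<tau>\<in>F. (\<sigma> \<inter> \<tau>) face_of \<sigma> \<and> (\<sigma> \<inter> \<tau>) face_of \<tau>)"

definition lattice_basis :: "(real^'n) set \<Rightarrow> bool" where
  "lattice_basis E \<longleftrightarrow> finite E \<and> E \<subseteq> lattice \<and> card E = CARD('n) \<and>
     (\<forall>v\<in>lattice. \<exists>k::real^'n \<Rightarrow> int. v = (\<Sum>e\<in>E. of_int (k e) *\<^sub>R e))"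

definition smooth_fan :: "(real^'n) set set \<Rightarrow> bool" where
  "smooth_fan F \<longleftrightarrow> is_fan F \<and>
     (\<forall>\<sigma>\<in>F. \<exists>B E. B \<subseteq> E \<and> lattice_basis E \<and> \<sigma> = cone_gen B)"

definition complete_fan :: "(real^'n) set set \<Rightarrow> bool" where
  "complete_fan F \<longleftrightarrow> is_fan F \<and> \<Union>F = UNIV"

text \<open>Projective: complete, and admitting a strictly convex (integral) support function
  h(v) = max over maximal cones tau of (m tau \<bullet> v), which equals m sigma \<bullet> v exactly on sigma.\<close>
definition projective_fan :: "(real^'n) set set \<Rightarrow> bool" where
  "projective_fan F \<longleftrightarrow> complete_fan F \<and>
     (\<exists>m :: (real^'n) set \<Rightarrow> real^'n. (\<forall>\<sigma>\<in>F. m \<sigma> \<in> lattice) \<and>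
        (\<forall>\<sigma>\<in>F. \<forall>\<tau>\<in>F. interior \<sigma> \<noteq> {} \<and> interior \<tau> \<noteq> {} \<longrightarrow>
           (\<forall>v\<in>\<sigma>. m \<tau> \<bullet> v \<le> m \<sigma> \<bullet> v \<and> (v \<notin> \<tau> \<longrightarrow> m \<tau> \<bullet> v < m \<sigma> \<bullet> v))))"

definition vertices :: "(real^'n) set set \<Rightarrow> (real^'n) set" where
  "vertices F = {c. c \<in> lattice \<and> c \<noteq> 0 \<and> cone_gen {c} \<in> F \<and>
                    (\<forall>t::real. 0 < t \<and> t < 1 \<longrightarrow> t *\<^sub>R c \<notin> lattice)}"

section \<open>The graded-commutative algebra Q[x_c] \<otimes> \<Lambda>(tau_c) and the dga D\<close>

text \<open>A monomial x^alpha tau_S is encoded as (alpha, S); an element is a finitely supported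
  Q-linear combination of such monomials. The exterior monomial tau_S means the product of
  the tau_c, c in S, in increasing order with respect to a fixed ranking r (injective on Gamma).\<close>

type_synonym 'v mono = "('v \<Rightarrow>\<^sub>0 nat) \<times> 'v set"
type_synonym 'v elt = "'v mono \<Rightarrow>\<^sub>0 rat"

definition mono_ok :: "'v set \<Rightarrow> 'v mono \<Rightarrow> bool" where
  "mono_ok \<Gamma> m \<longleftrightarrow> Poly_Mapping.keys (fst m) \<subseteq> \<Gamma> \<and> snd m \<subseteq> \<Gamma>"

definition Aset :: "'v set \<Rightarrow> 'v elt set" where
  "Aset \<Gamma> = {p. \<forall>m\<in>Poly_Mapping.keys p. mono_ok \<Gamma> m}"

definition mdeg :: "'v mono \<Rightarrow> nat" where
  "mdeg m = 2 * (\<Sum>c\<in>Poly_Mapping.keys (fst m). Poly_Mapping.lookup (fst m) c) + card (snd m)"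

definition Ahom :: "'v set \<Rightarrow> nat \<Rightarrow> 'v elt set" where
  "Ahom \<Gamma> i = {p \<in> Aset \<Gamma>. \<forall>m\<in>Poly_Mapping.keys p. mdeg m = i}"

definition ext_sign :: "('v \<Rightarrow> nat) \<Rightarrow> 'v set \<Rightarrow> 'v set \<Rightarrow> rat" where
  "ext_sign r S T = (if S \<inter> T = {} then (-1) ^ card {(s,t). s \<in> S \<and> t \<in> T \<and> r t < r s} else 0)"

definition mono_mult :: "('v \<Rightarrow> nat) \<Rightarrow> 'v mono \<Rightarrow> 'v mono \<Rightarrow> 'v elt" where
  "mono_mult r m n = Poly_Mapping.single (fst m + fst n, snd m \<union> snd n) (ext_sign r (snd m) (snd n))"

definition scal :: "rat \<Rightarrow> 'v elt \<Rightarrow> 'v elt" where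
  "scal q p = Poly_Mapping.map (\<lambda>v. q * v) p"

definition elt_mult :: "('v \<Rightarrow> nat) \<Rightarrow> 'v elt \<Rightarrow> 'v elt \<Rightarrow> 'v elt" where
  "elt_mult r p q = (\<Sum>m\<in>Poly_Mapping.keys p. \<Sum>n\<in>Poly_Mapping.keys q. scal (Poly_Mapping.lookup p m * Poly_Mapping.lookup q n) (mono_mult r m n))"

definition unit_elt :: "'v elt" where
  "unit_elt = Poly_Mapping.single (0, {}) 1"

inductive_set ideal_gen :: "'v set \<Rightarrow> ('v \<Rightarrow> nat) \<Rightarrow> 'v elt set \<Rightarrow> 'v elt set"
  for \<Gamma> r G where
  gen: "g \<in> G \<Longrightarrow> g \<in> ideal_gen \<Gamma> r G"
| zero: "0 \<in> ideal_gen \<Gamma> r G"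
| add: "p \<in> ideal_gen \<Gamma> r G \<Longrightarrow> q \<in> ideal_gen \<Gamma> r G \<Longrightarrow> p + q \<in> ideal_gen \<Gamma> r G"
| lmult: "a \<in> Aset \<Gamma> \<Longrightarrow> p \<in> ideal_gen \<Gamma> r G \<Longrightarrow> elt_mult r a p \<in> ideal_gen \<Gamma> r G"
| rmult: "a \<in> Aset \<Gamma> \<Longrightarrow> p \<in> ideal_gen \<Gamma> r G \<Longrightarrow> elt_mult r p a \<in> ideal_gen \<Gamma> r G"

text \<open>Generators of J: monomials x_{c_i1}..x_{c_ih} tau_{c_j1}..tau_{c_jk} (up to sign) whose
  vertices do not span a cone, i.e. whose set of vertices does not satisfy the predicate face.\<close>
definition bad_monos :: "'v set \<Rightarrow> ('v set \<Rightarrow> bool) \<Rightarrow> 'v elt set" where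
  "bad_monos \<Gamma> face = {Poly_Mapping.single m 1 | m. mono_ok \<Gamma> m \<and> \<not> face (Poly_Mapping.keys (fst m) \<union> snd m)}"

definition Jideal :: "'v set \<Rightarrow> ('v \<Rightarrow> nat) \<Rightarrow> ('v set \<Rightarrow> bool) \<Rightarrow> 'v elt set" where
  "Jideal \<Gamma> r face = ideal_gen \<Gamma> r (bad_monos \<Gamma> face)"

text \<open>The derivation d with d x_c = 0, d tau_c = x_c, written out on monomials:
  d(x^a tau_{s_1} ... tau_{s_k}) = sum_j (-1)^(j-1) x^a x_{s_j} tau_{s_1}..(omit s_j)..tau_{s_k}.\<close>
definition d_mono :: "('v \<Rightarrow> nat) \<Rightarrow> 'v mono \<Rightarrow> 'v elt" where
  "d_mono r m = (\<Sum>c\<in>snd m. Poly_Mapping.single (fst m + Poly_Mapping.single c 1, snd m - {c})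
                     ((-1) ^ card {s \<in> snd m. r s < r c}))"

definition dd :: "('v \<Rightarrow> nat) \<Rightarrow> 'v elt \<Rightarrow> 'v elt" where
  "dd r p = (\<Sum>m\<in>Poly_Mapping.keys p. scal (Poly_Mapping.lookup p m) (d_mono r m))"

text \<open>Cocycles and coboundaries of the quotient complex D = A/J in degree i,
  expressed through representatives in A.\<close>
definition cocycles :: "'v set \<Rightarrow> ('v \<Rightarrow> nat) \<Rightarrow> ('v set \<Rightarrow> bool) \<Rightarrow> nat \<Rightarrow> 'v elt set" where
  "cocycles \<Gamma> r face i = {a \<in> Ahom \<Gamma> i. dd r a \<in> Jideal \<Gamma> r face}"

definition coboundaries :: "'v set \<Rightarrow> ('v \<Rightarrow> nat) \<Rightarrow> ('v set \<Rightarrow> bool) \<Rightarrow> nat \<Rightarrow> 'v elt set" where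
  "coboundaries \<Gamma> r face i = {a \<in> Ahom \<Gamma> i.
      (\<exists>b. (i > 0 \<and> b \<in> Ahom \<Gamma> (i - 1) \<or> b = 0) \<and> a - dd r b \<in> Jideal \<Gamma> r face)}"

definition fan_rank :: "(real^'n) set set \<Rightarrow> real^'n \<Rightarrow> nat" where
  "fan_rank F = (SOME r. inj_on r (vertices F))"

definition fan_face :: "(real^'n) set set \<Rightarrow> (real^'n) set \<Rightarrow> bool" where
  "fan_face F I \<longleftrightarrow> cone_gen I \<in> F"

abbreviation "DF_cocycles F i \<equiv> cocycles (vertices F) (fan_rank F) (fan_face F) i"
abbreviation "DF_coboundaries F i \<equiv> coboundaries (vertices F) (fan_rank F) (fan_face F) i"

end

theory Submission
  imports Defs
begin

text \<open>
  The monomials \<open>x^\<alpha> \<tau>_S\<close> are graded by their support, the set of vertices occurring in them.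
  Both \<open>d\<close> and \<open>\<J>\<close> respect this grading, \<open>\<J>\<close> being spanned by the monomials whose support
  contains a set that does not span a cone. On a nonempty support with least vertex \<open>c\<close> (for the
  fixed ranking of the vertices), \<open>h(x^\<alpha> \<tau>_S) = x^(\<alpha> - e_c) \<tau>_c \<tau>_S\<close>, and \<open>h = 0\<close> if \<open>c \<in> S\<close>,
  satisfies \<open>dh + hd = id\<close> and preserves \<open>\<J>\<close>. Hence only the empty support, i.e. the constants,
  contributes to cohomology.
\<close>

lemma lookup_scal [simp]: "Poly_Mapping.lookup (scal q p) k = q * Poly_Mapping.lookup p k"
  by (simp add: scal_def Poly_Mapping.map.rep_eq when_def)

lemma scal_0 [simp]: "scal 0 p = 0"
  and scal_1 [simp]: "scal 1 p = p"
  and scal_zero_right [simp]: "scal q 0 = 0"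
  by (auto intro!: poly_mapping_eqI)

lemma scal_add_right: "scal q (p + p') = scal q p + scal q p'"
  and scal_add_left: "scal (q + q') p = scal q p + scal q' p"
  and scal_scal: "scal q (scal q' p) = scal (q * q') p"
  and scal_single: "scal q (Poly_Mapping.single k v) = Poly_Mapping.single k (q * v)"
  by (auto intro!: poly_mapping_eqI simp: lookup_add algebra_simps lookup_single when_def)

lemma scal_sum: "scal q (sum f A) = (\<Sum>x\<in>A. scal q (f x))"
  by (induction A rule: infinite_finite_induct) (auto simp: scal_add_right)

lemma keys_scal: "Poly_Mapping.keys (scal q p) \<subseteq> Poly_Mapping.keys p"
  by (auto simp: in_keys_iff)

lemma poly_mapping_sum_single: "p = (\<Sum>m\<in>Poly_Mapping.keys p. Poly_Mapping.single m (Poly_Mapping.lookup p m))"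
  by (rule poly_mapping_eqI) (auto simp: lookup_sum lookup_single when_def in_keys_iff)

definition lin_ext :: "('v mono \<Rightarrow> 'v elt) \<Rightarrow> 'v elt \<Rightarrow> 'v elt" where
  "lin_ext f p = (\<Sum>m\<in>Poly_Mapping.keys p. scal (Poly_Mapping.lookup p m) (f m))"

lemma lin_ext_superset:
  "finite K \<Longrightarrow> Poly_Mapping.keys p \<subseteq> K \<Longrightarrow> lin_ext f p = (\<Sum>m\<in>K. scal (Poly_Mapping.lookup p m) (f m))"
  unfolding lin_ext_def by (rule sum.mono_neutral_left) (auto simp: in_keys_iff)

lemma lin_ext_add: "lin_ext f (p + q) = lin_ext f p + lin_ext f q"
proof -
  let ?K = "Poly_Mapping.keys p \<union> Poly_Mapping.keys q"
  have "lin_ext f (p + q) = (\<Sum>m\<in>?K. scal (Poly_Mapping.lookup (p + q) m) (f m))"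
    using keys_add[of p q] by (intro lin_ext_superset) auto
  also have "\<dots> = (\<Sum>m\<in>?K. scal (Poly_Mapping.lookup p m) (f m)) + (\<Sum>m\<in>?K. scal (Poly_Mapping.lookup q m) (f m))"
    by (simp add: lookup_add scal_add_left sum.distrib)
  also have "\<dots> = lin_ext f p + lin_ext f q"
    by (subst (1 2) lin_ext_superset[symmetric]) auto
  finally show ?thesis .
qed

lemma lin_ext_zero [simp]: "lin_ext f 0 = 0"
  by (simp add: lin_ext_def)

lemma lin_ext_single [simp]: "lin_ext f (Poly_Mapping.single k v) = scal v (f k)"
  by (simp add: lin_ext_def)

lemma lin_ext_sum: "lin_ext f (sum g A) = (\<Sum>x\<in>A. lin_ext f (g x))"
  by (induction A rule: infinite_finite_induct) (auto simp: lin_ext_add)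

lemma lin_ext_scal: "lin_ext f (scal q p) = scal q (lin_ext f p)"
proof -
  have "lin_ext f (scal q p) = (\<Sum>m\<in>Poly_Mapping.keys p. scal (q * Poly_Mapping.lookup p m) (f m))"
    by (subst lin_ext_superset[where K = "Poly_Mapping.keys p"]) (auto simp: keys_scal[THEN subsetD])
  then show ?thesis
    by (simp add: lin_ext_def scal_sum scal_scal)
qed

lemma lin_ext_plus_fun: "lin_ext (\<lambda>m. f m + g m) p = lin_ext f p + lin_ext g p"
  by (simp add: lin_ext_def scal_add_right sum.distrib)

lemma lin_ext_lin_ext: "lin_ext f (lin_ext g p) = lin_ext (\<lambda>m. lin_ext f (g m)) p"
  by (simp add: lin_ext_def[of g] lin_ext_sum lin_ext_scal lin_ext_def[of "\<lambda>m. lin_ext f (g m)"])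

lemma lin_ext_id_on_keys:
  "(\<And>m. m \<in> Poly_Mapping.keys p \<Longrightarrow> f m = Poly_Mapping.single m 1) \<Longrightarrow> lin_ext f p = p"
  by (simp add: lin_ext_def scal_single flip: poly_mapping_sum_single)

lemma keys_lin_ext:
  "Poly_Mapping.keys (lin_ext f p) \<subseteq> (\<Union>m\<in>Poly_Mapping.keys p. Poly_Mapping.keys (f m))"
  unfolding lin_ext_def using keys_sum keys_scal by fastforce

lemma dd_eq_lin_ext: "dd r = lin_ext (d_mono r)"
  by (simp add: fun_eq_iff dd_def lin_ext_def)

section \<open>Supports of monomials and the ideal \<open>\<J>\<close>\<close>

text \<open>The simplifier rewrites \<open>ec c\<close> to \<open>Poly_Mapping.single c (Suc 0)\<close> via \<open>One_nat_def\<close>,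
  so rules stated with \<open>ec\<close> need \<open>del: One_nat_def\<close>.\<close>

abbreviation ec :: "'v \<Rightarrow> ('v \<Rightarrow>\<^sub>0 nat)" where
  "ec c \<equiv> Poly_Mapping.single c 1"

definition mono_supp :: "'v mono \<Rightarrow> 'v set" where
  "mono_supp m = Poly_Mapping.keys (fst m) \<union> snd m"

definition nonface_mono :: "('v set \<Rightarrow> bool) \<Rightarrow> 'v mono \<Rightarrow> bool" where
  "nonface_mono face m \<longleftrightarrow> (\<exists>B\<subseteq>mono_supp m. \<not> face B)"

lemma keys_add_nat:
  "Poly_Mapping.keys (a + b :: 'v \<Rightarrow>\<^sub>0 nat) = Poly_Mapping.keys a \<union> Poly_Mapping.keys b"
  by (auto simp: in_keys_iff lookup_add)

lemma mono_ok_iff_supp: "mono_ok \<Gamma> m \<longleftrightarrow> mono_supp m \<subseteq> \<Gamma>"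
  by (auto simp: mono_ok_def mono_supp_def)

lemma finite_snd_if_mono_ok: "finite \<Gamma> \<Longrightarrow> mono_ok \<Gamma> m \<Longrightarrow> finite (snd m)"
  by (auto simp: mono_ok_def dest: finite_subset)

lemma mono_supp_mult: "mono_supp (fst m + fst n, snd m \<union> snd n) = mono_supp m \<union> mono_supp n"
  by (auto simp: mono_supp_def keys_add_nat)

lemma mono_ok_mult: "mono_ok \<Gamma> m \<Longrightarrow> mono_ok \<Gamma> n \<Longrightarrow> mono_ok \<Gamma> (fst m + fst n, snd m \<union> snd n)"
  by (simp add: mono_ok_iff_supp mono_supp_mult)

lemma nonface_mono_mult:
  "nonface_mono face m \<or> nonface_mono face n \<Longrightarrow> nonface_mono face (fst m + fst n, snd m \<union> snd n)"
  unfolding nonface_mono_def mono_supp_mult by blast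

lemma keys_elt_mult:
  assumes "k \<in> Poly_Mapping.keys (elt_mult r p q)"
  obtains m n where "m \<in> Poly_Mapping.keys p" "n \<in> Poly_Mapping.keys q"
    and "k = (fst m + fst n, snd m \<union> snd n)"
proof -
  have "Poly_Mapping.keys (mono_mult r m n) \<subseteq> {(fst m + fst n, snd m \<union> snd n)}" for m n
    by (simp add: mono_mult_def)
  then show ?thesis
    using assms that keys_scal unfolding elt_mult_def by (fastforce dest!: subsetD[OF keys_sum])
qed

lemma elt_mult_single_single:
  "elt_mult r (Poly_Mapping.single m a) (Poly_Mapping.single n b) = scal (a * b) (mono_mult r m n)"
  by (simp add: elt_mult_def)

text \<open>The generators of \<open>\<J>\<close> have non-cone support, and multiplication only enlarges supports.\<close>

lemma keys_Jideal:
  assumes "p \<in> Jideal \<Gamma> r face" "m \<in> Poly_Mapping.keys p"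
  shows "mono_ok \<Gamma> m \<and> nonface_mono face m"
  using assms unfolding Jideal_def
proof (induction arbitrary: m rule: ideal_gen.induct)
  case (gen g)
  then obtain m' where "g = Poly_Mapping.single m' 1" "mono_ok \<Gamma> m'" "\<not> face (mono_supp m')"
    by (auto simp: bad_monos_def mono_supp_def)
  with gen.prems show ?case
    by (auto simp: nonface_mono_def split: if_splits)
next
  case (add p q)
  then show ?case
    using keys_add[of p q] by blast
next
  case (lmult a p)
  from lmult.prems obtain m' n where m': "m' \<in> Poly_Mapping.keys a" and n: "n \<in> Poly_Mapping.keys p"
    and m: "m = (fst m' + fst n, snd m' \<union> snd n)"
    by (rule keys_elt_mult)
  have "mono_ok \<Gamma> m'"
    using lmult.hyps(1) m' by (auto simp: Aset_def)
  then show ?case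
    using lmult.IH[OF n] m by (auto intro: mono_ok_mult nonface_mono_mult)
next
  case (rmult a p)
  from rmult.prems obtain m' n where m': "m' \<in> Poly_Mapping.keys p" and n: "n \<in> Poly_Mapping.keys a"
    and m: "m = (fst m' + fst n, snd m' \<union> snd n)"
    by (rule keys_elt_mult)
  have "mono_ok \<Gamma> n"
    using rmult.hyps(1) n by (auto simp: Aset_def)
  then show ?case
    using rmult.IH[OF m'] m by (auto intro: mono_ok_mult nonface_mono_mult)
qed simp

lemma split_exponent:
  assumes "B \<subseteq> mono_supp (\<alpha>, S)" "finite B"
  obtains \<gamma> where "Poly_Mapping.keys \<gamma> \<union> (B \<inter> S) = B" "\<gamma> + (\<alpha> - \<gamma>) = \<alpha>"
    "Poly_Mapping.keys (\<alpha> - \<gamma>) \<subseteq> Poly_Mapping.keys \<alpha>"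
proof
  define \<gamma> where "\<gamma> = (\<Sum>c\<in>B - S. ec c)"
  have lookup_\<gamma>: "Poly_Mapping.lookup \<gamma> c = (if c \<in> B - S then 1 else 0)" for c
    using assms(2) by (simp add: \<gamma>_def lookup_sum lookup_single when_def)
  show "Poly_Mapping.keys \<gamma> \<union> (B \<inter> S) = B"
    by (auto simp: in_keys_iff lookup_\<gamma> split: if_splits)
  have "c \<in> B - S \<Longrightarrow> Poly_Mapping.lookup \<alpha> c \<noteq> 0" for c
    using assms(1) by (auto simp: mono_supp_def in_keys_iff)
  then show "\<gamma> + (\<alpha> - \<gamma>) = \<alpha>"
    by (intro poly_mapping_eqI) (auto simp: lookup_add lookup_minus lookup_\<gamma>)
  show "Poly_Mapping.keys (\<alpha> - \<gamma>) \<subseteq> Poly_Mapping.keys \<alpha>"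
    by (auto simp: in_keys_iff lookup_minus)
qed

text \<open>A monomial with a non-cone subset \<open>B\<close> of its support is, up to a nonzero sign, a multiple
  of the generator of \<open>\<J>\<close> with support exactly \<open>B\<close>.\<close>

lemma single_nonface_in_Jideal:
  assumes ok: "mono_ok \<Gamma> m" and nonface: "nonface_mono face m" and fin: "finite (snd m)"
  shows "Poly_Mapping.single m q \<in> Jideal \<Gamma> r face"
proof -
  obtain \<alpha> S where m: "m = (\<alpha>, S)"
    by (cases m)
  obtain B where B: "B \<subseteq> mono_supp m" "\<not> face B"
    using nonface by (auto simp: nonface_mono_def)
  have "finite B"
    using B(1) fin by (auto simp: mono_supp_def m intro: finite_subset)
  then obtain \<gamma> where \<gamma>: "Poly_Mapping.keys \<gamma> \<union> (B \<inter> S) = B" "\<gamma> + (\<alpha> - \<gamma>) = \<alpha>"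
    "Poly_Mapping.keys (\<alpha> - \<gamma>) \<subseteq> Poly_Mapping.keys \<alpha>"
    using B(1) m split_exponent by metis
  have "mono_ok \<Gamma> (\<gamma>, B \<inter> S)"
    using ok B(1) \<gamma>(1) by (auto simp: mono_ok_iff_supp mono_supp_def)
  then have "Poly_Mapping.single (\<gamma>, B \<inter> S) 1 \<in> bad_monos \<Gamma> face"
    using B(2) \<gamma>(1) unfolding bad_monos_def by (intro CollectI exI[of _ "(\<gamma>, B \<inter> S)"]) simp
  then have gen: "Poly_Mapping.single (\<gamma>, B \<inter> S) 1 \<in> Jideal \<Gamma> r face"
    unfolding Jideal_def by (rule ideal_gen.gen)
  define \<epsilon> where "\<epsilon> = ext_sign r (B \<inter> S) (S - B)"
  have "\<epsilon> \<noteq> 0"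
    by (auto simp: \<epsilon>_def ext_sign_def)
  have "Poly_Mapping.single (\<alpha> - \<gamma>, S - B) (q / \<epsilon>) \<in> Aset \<Gamma>"
    using ok \<gamma>(3) by (auto simp: Aset_def mono_ok_def m)
  with gen have "elt_mult r (Poly_Mapping.single (\<gamma>, B \<inter> S) 1) (Poly_Mapping.single (\<alpha> - \<gamma>, S - B) (q / \<epsilon>))
      \<in> Jideal \<Gamma> r face"
    unfolding Jideal_def by (rule ideal_gen.rmult[rotated])
  moreover have "(B \<inter> S) \<union> (S - B) = S"
    by auto
  ultimately show ?thesis
    using \<open>\<epsilon> \<noteq> 0\<close> \<gamma>(2)
    by (simp add: elt_mult_single_single mono_mult_def scal_single m flip: \<epsilon>_def)
qed

lemma Jideal_sum:
  "finite A \<Longrightarrow> (\<And>x. x \<in> A \<Longrightarrow> f x \<in> Jideal \<Gamma> r face) \<Longrightarrow> sum f A \<in> Jideal \<Gamma> r face"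
  by (induction A rule: finite_induct) (auto simp: Jideal_def intro: ideal_gen.zero ideal_gen.add)

lemma Jideal_if_keys_nonface:
  assumes "finite \<Gamma>" "\<And>m. m \<in> Poly_Mapping.keys p \<Longrightarrow> mono_ok \<Gamma> m \<and> nonface_mono face m"
  shows "p \<in> Jideal \<Gamma> r face"
proof (subst poly_mapping_sum_single, rule Jideal_sum)
  fix m
  assume "m \<in> Poly_Mapping.keys p"
  moreover from this have "finite (snd m)"
    using assms finite_snd_if_mono_ok by blast
  ultimately show "Poly_Mapping.single m (Poly_Mapping.lookup p m) \<in> Jideal \<Gamma> r face"
    using assms(2) single_nonface_in_Jideal by blast
qed simp

section \<open>A contracting homotopy\<close>

definition homotopy_mono :: "('v \<Rightarrow> nat) \<Rightarrow> 'v mono \<Rightarrow> 'v elt" where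
  "homotopy_mono r m =
     (if mono_supp m = {} \<or> arg_min_on r (mono_supp m) \<in> snd m then 0
      else Poly_Mapping.single (fst m - ec (arg_min_on r (mono_supp m)),
                                insert (arg_min_on r (mono_supp m)) (snd m)) 1)"

definition tau_sign :: "('v \<Rightarrow> nat) \<Rightarrow> 'v set \<Rightarrow> 'v \<Rightarrow> rat" where
  "tau_sign r S s = (-1) ^ card {t \<in> S. r t < r s}"

lemma d_mono_tau_sign:
  "d_mono r m = (\<Sum>s\<in>snd m. Poly_Mapping.single (fst m + ec s, snd m - {s}) (tau_sign r (snd m) s))"
  by (simp add: d_mono_def tau_sign_def)

lemma tau_sign_least: "(\<And>t. t \<in> S \<Longrightarrow> r s \<le> r t) \<Longrightarrow> tau_sign r S s = 1"
proof -
  assume "\<And>t. t \<in> S \<Longrightarrow> r s \<le> r t"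
  then have "{t \<in> S. r t < r s} = {}"
    by force
  then show ?thesis
    unfolding tau_sign_def by (metis card.empty power_0)
qed

lemma tau_sign_insert_smaller:
  assumes "finite S" "c \<notin> S" "r c < r s"
  shows "tau_sign r (insert c S) s = - tau_sign r S s"
proof -
  have "{t \<in> insert c S. r t < r s} = insert c {t \<in> S. r t < r s}"
    using assms(3) by auto
  then show ?thesis
    using assms(1,2) by (simp add: tau_sign_def)
qed

lemma mono_supp_d_term: "s \<in> S \<Longrightarrow> mono_supp (\<alpha> + ec s, S - {s}) = mono_supp (\<alpha>, S)"
  by (auto simp: mono_supp_def keys_add_nat)

lemma homotopy_mono_d_term:
  assumes "s \<in> S" "c = arg_min_on r (mono_supp (\<alpha>, S))"
  shows "homotopy_mono r (\<alpha> + ec s, S - {s}) =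
    (if c \<in> S - {s} then 0 else Poly_Mapping.single (\<alpha> + ec s - ec c, insert c (S - {s})) 1)"
  using assms mono_supp_d_term[OF assms(1)] by (auto simp: homotopy_mono_def mono_supp_def)

lemma add_ec_minus_ec:
  assumes "c \<in> Poly_Mapping.keys \<alpha>"
  shows "\<alpha> - ec c + ec s = \<alpha> + ec s - ec c" "\<alpha> - ec c + ec c = \<alpha>"
  using assms by (auto intro!: poly_mapping_eqI simp: in_keys_iff lookup_minus lookup_add lookup_single when_def)

text \<open>Here \<open>h\<close> kills the monomial, and only the term of \<open>d\<close> removing \<open>\<tau>\<^sub>c\<close> survives \<open>h\<close>.\<close>

lemma chain_homotopy_mono_least_in_tau:
  assumes fin: "finite S" and ne: "mono_supp (\<alpha>, S) \<noteq> {}"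
    and c: "arg_min_on r (mono_supp (\<alpha>, S)) \<in> S" (is "?c \<in> S")
  shows "dd r (homotopy_mono r (\<alpha>, S)) + lin_ext (homotopy_mono r) (d_mono r (\<alpha>, S))
    = Poly_Mapping.single (\<alpha>, S) 1"
proof -
  have "finite (mono_supp (\<alpha>, S))"
    using fin by (simp add: mono_supp_def)
  then have "tau_sign r S ?c = 1"
    using ne by (intro tau_sign_least arg_min_least) (auto simp: mono_supp_def)
  then have "scal (tau_sign r S s) (homotopy_mono r (\<alpha> + ec s, S - {s}))
      = (if s = ?c then Poly_Mapping.single (\<alpha>, S) 1 else 0)" if "s \<in> S" for s
    using that c by (simp add: homotopy_mono_d_term[OF that refl] scal_single insert_absorb del: One_nat_def)
  then have "lin_ext (homotopy_mono r) (d_mono r (\<alpha>, S))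
      = (\<Sum>s\<in>S. if s = ?c then Poly_Mapping.single (\<alpha>, S) 1 else 0)"
    by (simp add: d_mono_tau_sign lin_ext_sum)
  also have "\<dots> = Poly_Mapping.single (\<alpha>, S) 1"
    using c fin by simp
  finally show ?thesis
    using c ne by (simp add: homotopy_mono_def dd_eq_lin_ext)
qed

text \<open>If instead the least vertex \<open>c\<close> only occurs in \<open>x\<^sup>\<alpha>\<close>, then \<open>d(h m)\<close> is \<open>m\<close> plus the terms of
  \<open>h(d m)\<close> with opposite signs, as \<open>\<tau>\<^sub>c\<close> is moved past no smaller generator.\<close>

lemma chain_homotopy_mono_least_in_x:
  assumes fin: "finite S" and ne: "mono_supp (\<alpha>, S) \<noteq> {}" and inj: "inj_on r (mono_supp (\<alpha>, S))"
    and c: "arg_min_on r (mono_supp (\<alpha>, S)) \<notin> S" (is "?c \<notin> S")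
  shows "dd r (homotopy_mono r (\<alpha>, S)) + lin_ext (homotopy_mono r) (d_mono r (\<alpha>, S))
    = Poly_Mapping.single (\<alpha>, S) 1"
proof -
  let ?m = "Poly_Mapping.single (\<alpha>, S) 1"
  let ?t = "\<lambda>s. \<alpha> + ec s - ec ?c" and ?T = "\<lambda>s. insert ?c (S - {s})"
  have fin_supp: "finite (mono_supp (\<alpha>, S))"
    using fin by (simp add: mono_supp_def)
  have c_supp: "?c \<in> mono_supp (\<alpha>, S)"
    using arg_min_if_finite(1)[OF fin_supp ne] .
  then have c_keys: "?c \<in> Poly_Mapping.keys \<alpha>"
    using c by (simp add: mono_supp_def)
  have c_least: "r ?c < r s" if "s \<in> S" for s
  proof -
    have "s \<in> mono_supp (\<alpha>, S)" "s \<noteq> ?c"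
      using that c by (auto simp: mono_supp_def)
    then show ?thesis
      using arg_min_least[OF fin_supp ne] inj_onD[OF inj _ c_supp] by (metis le_neq_implies_less)
  qed
  have "tau_sign r (insert ?c S) ?c = 1"
    using c_least by (intro tau_sign_least) (auto simp: less_imp_le)
  moreover have "tau_sign r (insert ?c S) s = - tau_sign r S s" if "s \<in> S" for s
    using fin c c_least[OF that] by (rule tau_sign_insert_smaller)
  moreover have "insert ?c S - {s} = ?T s" if "s \<in> S" for s
    using that c by auto
  ultimately have "dd r (homotopy_mono r (\<alpha>, S))
      = ?m + (\<Sum>s\<in>S. Poly_Mapping.single (?t s, ?T s) (- tau_sign r S s))"
    using c fin ne c_keys
    by (simp add: homotopy_mono_def dd_eq_lin_ext d_mono_tau_sign add_ec_minus_ec cong: sum.cong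
        del: One_nat_def)
  moreover have "lin_ext (homotopy_mono r) (d_mono r (\<alpha>, S))
      = (\<Sum>s\<in>S. Poly_Mapping.single (?t s, ?T s) (tau_sign r S s))"
    using c by (simp add: d_mono_tau_sign lin_ext_sum homotopy_mono_d_term scal_single del: One_nat_def)
  ultimately show ?thesis
    by (simp add: add.assoc single_uminus flip: sum.distrib)
qed

lemma chain_homotopy:
  assumes "\<And>m. m \<in> Poly_Mapping.keys a \<Longrightarrow>
    finite (snd m) \<and> mono_supp m \<noteq> {} \<and> inj_on r (mono_supp m)"
  shows "dd r (lin_ext (homotopy_mono r) a) + lin_ext (homotopy_mono r) (dd r a) = a"
proof -
  have "dd r (lin_ext (homotopy_mono r) a) + lin_ext (homotopy_mono r) (dd r a)
      = lin_ext (\<lambda>m. dd r (homotopy_mono r m) + lin_ext (homotopy_mono r) (d_mono r m)) a"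
    by (simp add: dd_eq_lin_ext lin_ext_lin_ext lin_ext_plus_fun)
  also have "\<dots> = a"
  proof (rule lin_ext_id_on_keys)
    fix m
    assume "m \<in> Poly_Mapping.keys a"
    moreover obtain \<alpha> S where "m = (\<alpha>, S)"
      by (cases m)
    ultimately show "dd r (homotopy_mono r m) + lin_ext (homotopy_mono r) (d_mono r m) = Poly_Mapping.single m 1"
      using assms chain_homotopy_mono_least_in_tau[of S \<alpha> r] chain_homotopy_mono_least_in_x[of S \<alpha> r]
      by (cases "arg_min_on r (mono_supp (\<alpha>, S)) \<in> S") auto
  qed
  finally show ?thesis .
qed

definition total_degree :: "('v \<Rightarrow>\<^sub>0 nat) \<Rightarrow> nat" where
  "total_degree \<alpha> = (\<Sum>c\<in>Poly_Mapping.keys \<alpha>. Poly_Mapping.lookup \<alpha> c)"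

lemma total_degree_add: "total_degree (\<alpha> + \<beta>) = total_degree \<alpha> + total_degree \<beta>"
  unfolding total_degree_def by (rule setsum_keys_plus_distrib) auto

lemma total_degree_ec [simp]: "total_degree (ec c) = 1"
  by (simp add: total_degree_def)

lemma mdeg_total_degree: "mdeg m = 2 * total_degree (fst m) + card (snd m)"
  by (simp add: mdeg_def total_degree_def)

lemma keys_homotopy_mono:
  assumes "k \<in> Poly_Mapping.keys (homotopy_mono r m)" "finite (snd m)"
  shows "mono_supp k = mono_supp m" "mdeg k + 1 = mdeg m"
proof -
  define c where "c = arg_min_on r (mono_supp m)"
  have "mono_supp m \<noteq> {}" and c: "c \<notin> snd m" and k: "k = (fst m - ec c, insert c (snd m))"
    using assms(1) unfolding homotopy_mono_def c_def[symmetric] by (auto split: if_splits)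
  moreover have "finite (mono_supp m)"
    using assms(2) by (simp add: mono_supp_def)
  ultimately have "c \<in> mono_supp m"
    unfolding c_def by (intro arg_min_if_finite(1))
  then have c_keys: "c \<in> Poly_Mapping.keys (fst m)"
    using c by (simp add: mono_supp_def)
  then have "insert c (Poly_Mapping.keys (fst m - ec c)) = Poly_Mapping.keys (fst m)"
    by (auto simp: in_keys_iff lookup_minus lookup_single when_def split: if_splits)
  then show "mono_supp k = mono_supp m"
    by (auto simp: k mono_supp_def)
  have "total_degree (fst m - ec c) + 1 = total_degree (fst m)"
    using total_degree_add[of "fst m - ec c" "ec c"] add_ec_minus_ec(2)[OF c_keys] by (simp del: One_nat_def)
  then show "mdeg k + 1 = mdeg m"
    using assms(2) c by (simp add: k mdeg_total_degree)
qed

lemma homotopy_preserves_Jideal: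
  assumes "finite \<Gamma>" "p \<in> Jideal \<Gamma> r face"
  shows "lin_ext (homotopy_mono r) p \<in> Jideal \<Gamma> r face"
proof (rule Jideal_if_keys_nonface[OF assms(1)])
  fix k
  assume "k \<in> Poly_Mapping.keys (lin_ext (homotopy_mono r) p)"
  then obtain m where m: "m \<in> Poly_Mapping.keys p" and k: "k \<in> Poly_Mapping.keys (homotopy_mono r m)"
    using keys_lin_ext by blast
  have "mono_ok \<Gamma> m \<and> nonface_mono face m"
    using keys_Jideal[OF assms(2) m] .
  moreover from this have "finite (snd m)"
    using assms(1) finite_snd_if_mono_ok by blast
  ultimately show "mono_ok \<Gamma> k \<and> nonface_mono face k"
    using keys_homotopy_mono(1)[OF k] by (simp add: mono_ok_iff_supp nonface_mono_def)
qed

section \<open>Cohomology of the quotient\<close>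

lemma unit_elt_cocycle: "unit_elt \<in> cocycles \<Gamma> r face 0"
  by (simp add: cocycles_def Ahom_def Aset_def mono_ok_def mdeg_def unit_elt_def dd_eq_lin_ext
      d_mono_def Jideal_def ideal_gen.zero)

lemma unit_elt_not_coboundary:
  assumes "face {}"
  shows "unit_elt \<notin> coboundaries \<Gamma> r face 0"
proof
  assume "unit_elt \<in> coboundaries \<Gamma> r face 0"
  then have "unit_elt \<in> Jideal \<Gamma> r face"
    by (auto simp: coboundaries_def dd_eq_lin_ext)
  then have "nonface_mono face (0, {})"
    using keys_Jideal by (fastforce simp: unit_elt_def)
  with assms show False
    by (simp add: nonface_mono_def mono_supp_def)
qed

lemma Ahom_0_eq_scal_unit:
  assumes "finite \<Gamma>" "a \<in> Ahom \<Gamma> 0"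
  shows "a = scal (Poly_Mapping.lookup a (0, {})) unit_elt"
proof -
  have "m = (0, {})" if m: "m \<in> Poly_Mapping.keys a" for m
  proof -
    have "mono_ok \<Gamma> m" and deg: "mdeg m = 0"
      using assms(2) m by (auto simp: Ahom_def Aset_def)
    then have "finite (snd m)"
      using assms(1) finite_snd_if_mono_ok by blast
    then have "snd m = {}" "\<forall>c\<in>Poly_Mapping.keys (fst m). Poly_Mapping.lookup (fst m) c = 0"
      using deg by (auto simp: mdeg_def)
    then show ?thesis
      by (cases m) (auto simp: in_keys_iff intro!: poly_mapping_eqI)
  qed
  then show ?thesis
    by (intro poly_mapping_eqI) (metis lookup_scal lookup_single_eq lookup_single_not_eq
        mult.right_neutral mult_zero_right not_in_keys_iff_lookup_eq_zero unit_elt_def)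
qed

lemma cocycles_0_scal_unit:
  assumes "finite \<Gamma>" "a \<in> cocycles \<Gamma> r face 0"
  shows "\<exists>q. a - scal q unit_elt \<in> coboundaries \<Gamma> r face 0"
proof -
  have "0 \<in> coboundaries \<Gamma> r face 0"
    by (auto simp: coboundaries_def Ahom_def Aset_def dd_eq_lin_ext Jideal_def ideal_gen.zero)
  moreover have "a - scal (Poly_Mapping.lookup a (0, {})) unit_elt = 0"
    using assms Ahom_0_eq_scal_unit[OF assms(1)] by (simp add: cocycles_def del: lookup_scal)
  ultimately show ?thesis
    by metis
qed

lemma keys_Ahom_pos:
  assumes "finite \<Gamma>" "inj_on r \<Gamma>" "a \<in> Ahom \<Gamma> i" "i > 0" "m \<in> Poly_Mapping.keys a"
  shows "finite (snd m)" "mono_supp m \<noteq> {}" "inj_on r (mono_supp m)"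
proof -
  have supp: "mono_supp m \<subseteq> \<Gamma>" and "mdeg m = i"
    using assms(3,5) by (auto simp: Ahom_def Aset_def mono_ok_iff_supp)
  then show "finite (snd m)" "inj_on r (mono_supp m)"
    using assms(1,2) by (auto simp: mono_supp_def intro: finite_subset inj_on_subset)
  show "mono_supp m \<noteq> {}"
    using \<open>mdeg m = i\<close> assms(4) by (auto simp: mono_supp_def mdeg_def)
qed

lemma homotopy_Ahom:
  assumes "finite \<Gamma>" "a \<in> Ahom \<Gamma> i"
  shows "lin_ext (homotopy_mono r) a \<in> Ahom \<Gamma> (i - 1)"
  unfolding Ahom_def Aset_def
proof (intro CollectI conjI ballI)
  fix k
  assume "k \<in> Poly_Mapping.keys (lin_ext (homotopy_mono r) a)"
  then obtain m where m: "m \<in> Poly_Mapping.keys a" and k: "k \<in> Poly_Mapping.keys (homotopy_mono r m)"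
    using keys_lin_ext by blast
  have "mono_ok \<Gamma> m" "mdeg m = i"
    using assms(2) m by (auto simp: Ahom_def Aset_def)
  moreover from this have "finite (snd m)"
    using assms(1) finite_snd_if_mono_ok by blast
  ultimately show "mono_ok \<Gamma> k" "mdeg k = i - 1"
    using keys_homotopy_mono[OF k] by (auto simp: mono_ok_iff_supp)
qed

lemma cocycles_subset_coboundaries:
  assumes "finite \<Gamma>" "inj_on r \<Gamma>" "i > 0"
  shows "cocycles \<Gamma> r face i \<subseteq> coboundaries \<Gamma> r face i"
proof
  fix a
  assume "a \<in> cocycles \<Gamma> r face i"
  then have a: "a \<in> Ahom \<Gamma> i" and da: "dd r a \<in> Jideal \<Gamma> r face"
    by (auto simp: cocycles_def)
  define b where "b = lin_ext (homotopy_mono r) a"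
  have "a - dd r b = lin_ext (homotopy_mono r) (dd r a)"
    using chain_homotopy[of a r] keys_Ahom_pos[OF assms(1,2) a assms(3)]
    by (simp add: b_def algebra_simps)
  then have "a - dd r b \<in> Jideal \<Gamma> r face"
    using homotopy_preserves_Jideal[OF assms(1) da] by simp
  moreover have "b \<in> Ahom \<Gamma> (i - 1)"
    unfolding b_def using assms(1) a by (rule homotopy_Ahom)
  ultimately show "a \<in> coboundaries \<Gamma> r face i"
    using a assms(3) by (auto simp: coboundaries_def)
qed

section \<open>Facts about fans\<close>

lemma cone_gen_single: "cone_gen {c} = {t *\<^sub>R c | t. t \<ge> 0}"
  by (auto simp: cone_gen_def)

lemma conic_cone_gen: "conic (cone_gen S)"
  unfolding conic_def cone_gen_def
  by (auto intro!: exI[of _ "\<lambda>c. _ * _ c"] simp: scaleR_sum_right)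

lemma mem_cone_gen_self: "c \<in> cone_gen {c}"
  by (auto simp: cone_gen_single intro!: exI[of _ 1])

lemma vertex_multiple_ge_1:
  assumes "c \<in> vertices F" "t \<ge> 0" "t *\<^sub>R c \<in> lattice" "t *\<^sub>R c \<noteq> 0"
  shows "t \<ge> 1"
proof (rule ccontr)
  assume "\<not> t \<ge> 1"
  with assms(2,4) have "0 < t" "t < 1"
    by auto
  with assms(1,3) show False
    by (auto simp: vertices_def)
qed

lemma vertices_ray_inj:
  assumes c: "c \<in> vertices F" and c': "c' \<in> vertices F" and eq: "cone_gen {c} = cone_gen {c'}"
  shows "c = c'"
proof -
  obtain t where t: "t \<ge> 0" "c' = t *\<^sub>R c"
    using mem_cone_gen_self[of c'] eq by (auto simp: cone_gen_single)
  obtain t' where t': "t' \<ge> 0" "c = t' *\<^sub>R c'"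
    using mem_cone_gen_self[of c] eq by (auto simp: cone_gen_single)
  have t_ge: "t \<ge> 1"
    using vertex_multiple_ge_1[OF c t(1)] c' t(2) by (simp add: vertices_def)
  have t'_ge: "t' \<ge> 1"
    using vertex_multiple_ge_1[OF c' t'(1)] c t'(2) by (simp add: vertices_def)
  have "(t' * t) *\<^sub>R c = 1 *\<^sub>R c"
    using t'(2) unfolding t(2) scaleR_scaleR scaleR_one by (rule sym)
  then have tt': "t' * t = 1"
    using c unfolding scaleR_cancel_right by (simp add: vertices_def)
  have "t' \<le> 1"
    using mult_left_mono[OF t_ge, of t'] t'_ge tt' by simp
  then have "t = 1"
    using t'_ge tt' by simp
  then show ?thesis
    using t by simp
qed

lemma finite_vertices:
  assumes "is_fan F"
  shows "finite (vertices F)"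
proof (rule inj_on_finite[where f = "\<lambda>c. cone_gen {c}"])
  show "inj_on (\<lambda>c. cone_gen {c}) (vertices F)"
    by (auto intro: inj_onI vertices_ray_inj)
  show "(\<lambda>c. cone_gen {c}) ` vertices F \<subseteq> F" "finite F"
    using assms by (auto simp: vertices_def is_fan_def)
qed

lemma neg_in_pointed_conic:
  assumes "conic \<sigma>" "a \<in> \<sigma>" "b \<in> \<sigma>" "0 \<in> open_segment a b"
  shows "- a \<in> \<sigma>"
proof -
  obtain u where u: "0 < u" "u < 1" "(1 - u) *\<^sub>R a + u *\<^sub>R b = 0"
    using assms(4) by (auto simp: in_segment)
  then have eq: "(1 - u) *\<^sub>R (- a) = u *\<^sub>R b"
    by (simp add: algebra_simps)
  have "- a = inverse (1 - u) *\<^sub>R ((1 - u) *\<^sub>R (- a))"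
    using u(2) by simp
  also have "\<dots> = (inverse (1 - u) * u) *\<^sub>R b"
    by (simp only: eq scaleR_scaleR)
  finally show ?thesis
    using conic_mul[OF assms(1,3), of "inverse (1 - u) * u"] u by simp
qed

lemma zero_extreme_point_pointed_conic:
  assumes "conic \<sigma>" "\<sigma> \<inter> uminus ` \<sigma> = {0}"
  shows "0 extreme_point_of \<sigma>"
proof -
  have neg: "a = 0" if "a \<in> \<sigma>" "- a \<in> \<sigma>" for a
    using that assms(2) by (metis IntI image_eqI minus_minus singletonD)
  show ?thesis
    unfolding extreme_point_of_def
  proof (intro conjI ballI notI)
    show "0 \<in> \<sigma>"
      using assms(2) by blast
    fix a b
    assume ab: "a \<in> \<sigma>" "b \<in> \<sigma>" "0 \<in> open_segment a b"
    moreover have "0 \<in> open_segment b a"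
      using ab(3) by (simp add: open_segment_commute)
    ultimately have "a = 0" "b = 0"
      using neg neg_in_pointed_conic[OF assms(1)] by blast+
    with ab(3) show False
      by simp
  qed
qed

lemma zero_cone_in_fan:
  assumes "is_fan F" "F \<noteq> {}"
  shows "{0} \<in> F"
proof -
  obtain \<sigma> where \<sigma>: "\<sigma> \<in> F"
    using assms(2) by blast
  then obtain S where "\<sigma> = cone_gen S" "\<sigma> \<inter> uminus ` \<sigma> = {0}"
    using assms(1) by (auto simp: is_fan_def rat_cone_def)
  then have "0 extreme_point_of \<sigma>"
    using zero_extreme_point_pointed_conic conic_cone_gen by metis
  then have "{0} face_of \<sigma>"
    by (simp add: face_of_singleton)
  then show ?thesis
    using assms(1) \<sigma> by (auto simp: is_fan_def)
qed

theorem proposition3p1: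
  fixes F :: "(real^'n) set set"
  assumes "smooth_fan F" and "projective_fan F"
  shows "unit_elt \<in> DF_cocycles F 0 \<and> unit_elt \<notin> DF_coboundaries F 0
         \<and> (\<forall>a\<in>DF_cocycles F 0. \<exists>q::rat. a - scal q unit_elt \<in> DF_coboundaries F 0)
         \<and> (\<forall>i>0. DF_cocycles F i \<subseteq> DF_coboundaries F i)"
proof -
  have fan: "is_fan F" and "F \<noteq> {}"
    using assms by (auto simp: smooth_fan_def projective_fan_def complete_fan_def)
  have fin: "finite (vertices F)"
    using fan by (rule finite_vertices)
  then have "\<exists>r::real^'n \<Rightarrow> nat. inj_on r (vertices F)"
    using finite_imp_inj_to_nat_seg by blast
  then have inj: "inj_on (fan_rank F) (vertices F)"
    unfolding fan_rank_def by (rule someI_ex)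
  have "fan_face F {}"
    using zero_cone_in_fan[OF fan \<open>F \<noteq> {}\<close>] by (simp add: fan_face_def cone_gen_def)
  then have "unit_elt \<notin> DF_coboundaries F 0"
    by (rule unit_elt_not_coboundary)
  then show ?thesis
    using unit_elt_cocycle cocycles_0_scal_unit[OF fin] cocycles_subset_coboundaries[OF fin inj]
    by simp
qed

end
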